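(* Let $\mathfrak{C}$ be a chromosome-set. If there exists $K\ge 1$ such that every string of length $K$ is a conductor for $\mathfrak{C}$, then $\mathrm{CPC}(\mathrm{DBG}(\mathfrak{C},K))=\mathfrak{C}$.
   Context: All strings are over a fixed finite alphabet $\Sigma$. A cyclic string is a bi-infinite periodic word $\mathbb{Z}\to\Sigma$, considered up to shifting indices; for a nonempty finite string $x$, $\langle x\rangle$ is the cyclic string repeating $x$ in both directions. A chromosome-set is a set of cyclic strings; a finite string is a substring of it if it is a contiguous block of one of its elements. A finite string $v$ is a conductor for $\mathfrak{C}$ if for all nonempty finite strings $a,b$ such that $va$ and $vb$ both end with $v$, we have $\langle ab\rangle\in\mathfrak{C}$ if and only if $\langle a\rangle\in\mathfrak{C}$ and $\langle b\rangle\in\mathfrak{C}$. $\mathrm{DBG}(\mathfrak{C},K)$ is the de Bruijn graph: its vertices are the strings of length $K$ that are substrings of $\mathfrak{C}$ (labelled by themselves), and for each string $w$ of length $K+1$ that is a substring of $\mathfrak{C}$ there is an edge labelled $w$ from the vertex equal to its length-$K$ prefix to the vertex equal to its length-$K$ suffix. The label of a walk $v_0,e_1,\dots,e_n,v_n$ is $Label(e_1)$ followed, for $i\ge 2$, by $Label(e_i)$ with its first $|Label(v_{i-1})|$ characters removed. A circuit is a primitive closed walk up to rotation; if its walk label is $Label(v_0)x$, its label is $\langle x\rangle$. $\mathrm{CPC}(\mathfrak{G})$ is the set of circuit labels of a graph $\mathfrak{G}$. *)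

theory Defs
  imports Main "HOL-Library.Sublist"
begin

text \<open>A cyclic string is a periodic bi-infinite word considered up to shifting
  indices; we represent it as the full shift-orbit (a set of bi-infinite words).\<close>

definition shift_orbit :: "(int \<Rightarrow> 'a) \<Rightarrow> (int \<Rightarrow> 'a) set" where
  "shift_orbit f = range (\<lambda>k::int. \<lambda>i. f (i + k))"

definition periodic_word :: "(int \<Rightarrow> 'a) \<Rightarrow> bool" where
  "periodic_word f \<longleftrightarrow> (\<exists>p::int. p > 0 \<and> (\<forall>i. f (i + p) = f i))"

definition is_cyclic_string :: "(int \<Rightarrow> 'a) set \<Rightarrow> bool" where
  "is_cyclic_string S \<longleftrightarrow> (\<exists>f. periodic_word f \<and> S = shift_orbit f)"

definition cyc :: "'a list \<Rightarrow> (int \<Rightarrow> 'a) set" where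
  "cyc x = shift_orbit (\<lambda>i. x ! nat (i mod int (length x)))"

definition chromosome_set :: "(int \<Rightarrow> 'a) set set \<Rightarrow> bool" where
  "chromosome_set C \<longleftrightarrow> (\<forall>S\<in>C. is_cyclic_string S)"

definition substring_of :: "'a list \<Rightarrow> (int \<Rightarrow> 'a) set set \<Rightarrow> bool" where
  "substring_of w C \<longleftrightarrow>
     (\<exists>S\<in>C. \<exists>f\<in>S. \<exists>i::int. \<forall>j<length w. f (i + int j) = w ! j)"

definition conductor :: "(int \<Rightarrow> 'a) set set \<Rightarrow> 'a list \<Rightarrow> bool" where
  "conductor C v \<longleftrightarrow>
     (\<forall>a b. a \<noteq> [] \<longrightarrow> b \<noteq> [] \<longrightarrow> suffix v (v @ a) \<longrightarrow> suffix v (v @ b) \<longrightarrow>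
        (cyc (a @ b) \<in> C \<longleftrightarrow> cyc a \<in> C \<and> cyc b \<in> C))"

record ('v, 'e, 'a) lgraph =
  verts :: "'v set"
  arcs :: "'e set"
  src :: "'e \<Rightarrow> 'v"
  tgt :: "'e \<Rightarrow> 'v"
  vlab :: "'v \<Rightarrow> 'a list"
  elab :: "'e \<Rightarrow> 'a list"

definition DBG :: "(int \<Rightarrow> 'a) set set \<Rightarrow> nat \<Rightarrow> ('a list, 'a list, 'a) lgraph" where
  "DBG C K = \<lparr> verts = {w. length w = K \<and> substring_of w C},
               arcs = {w. length w = Suc K \<and> substring_of w C},
               src = take K, tgt = drop 1, vlab = id, elab = id \<rparr>"

definition closed_walk :: "('v, 'e, 'a) lgraph \<Rightarrow> 'e list \<Rightarrow> bool" where
  "closed_walk G es \<longleftrightarrow> es \<noteq> [] \<and> set es \<subseteq> arcs G \<and>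
     (\<forall>e\<in>set es. src G e \<in> verts G \<and> tgt G e \<in> verts G) \<and>
     (\<forall>i. Suc i < length es \<longrightarrow> tgt G (es ! i) = src G (es ! Suc i)) \<and>
     tgt G (last es) = src G (hd es)"

definition walk_label :: "('v, 'e, 'a) lgraph \<Rightarrow> 'e list \<Rightarrow> 'a list" where
  "walk_label G es = elab G (hd es) @
     concat (map (\<lambda>e. drop (length (vlab G (src G e))) (elab G e)) (tl es))"

definition primitive_walk :: "'e list \<Rightarrow> bool" where
  "primitive_walk es \<longleftrightarrow> \<not> (\<exists>ys k. k \<ge> 2 \<and> es = concat (replicate k ys))"

text \<open>Circuit labels: a circuit whose walk label is Label(v0) x has label \<langle>x\<rangle>.
  (Rotations of a closed walk yield the same cyclic label, so taking all closed
   primitive walks gives the set of circuit labels.)\<close>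
definition CPC :: "('v, 'e, 'a) lgraph \<Rightarrow> (int \<Rightarrow> 'a) set set" where
  "CPC G = {cyc x | es x. closed_walk G es \<and> primitive_walk es \<and> x \<noteq> [] \<and>
                          walk_label G es = vlab G (src G (hd es)) @ x}"

end

theory Submission
  imports Defs
begin

text \<open>
  A closed walk in DBG(C, K) reads a string x while passing through K-letter vertices. Every edge
  is a (K+1)-letter block of some chromosome, so one full period of that chromosome, started
  after the vertex preceding the edge, is a loop at that vertex whose cyclic string lies in C.
  Splicing these loops in one at a time along the walk, by the conductor property at the current
  vertex and a rotation, yields a chromosome of the form x followed by a loop back to the start;
  a last application of the conductor property at the start vertex splits off \<langle>x\<rangle>.
  Conversely, a chromosome of least period P is the label of the closed walk through its P
  consecutive (K+1)-blocks, and that walk is primitive because a proper power of it would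
  exhibit a smaller period.
\<close>

definition window :: "(int \<Rightarrow> 'a) \<Rightarrow> int \<Rightarrow> nat \<Rightarrow> 'a list" where
  "window f i m = map (\<lambda>t. f (i + int t)) [0..<m]"

lemma length_window [simp]: "length (window f i m) = m"
  by (simp add: window_def)

lemma nth_window [simp]: "t < m \<Longrightarrow> window f i m ! t = f (i + int t)"
  by (simp add: window_def)

lemma window_add: "window f i (m + k) = window f i m @ window f (i + int m) k"
  by (rule nth_equalityI) (auto simp: nth_append algebra_simps)

lemma take_window: "k \<le> m \<Longrightarrow> take k (window f i m) = window f i k"
  by (rule nth_equalityI) auto

lemma drop_window: "k \<le> m \<Longrightarrow> drop k (window f i m) = window f (i + int k) (m - k)"
  by (rule nth_equalityI) (auto simp: algebra_simps)

lemma hd_window: "hd (window f i (Suc m)) = f i"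
  by (simp add: window_def hd_map del: upt_Suc)

lemma last_window: "last (window f i (Suc m)) = f (i + int m)"
  by (simp add: window_def last_map del: upt_Suc)

lemma substring_of_iff_window:
  "substring_of w C \<longleftrightarrow> (\<exists>S\<in>C. \<exists>f\<in>S. \<exists>i. w = window f i (length w))"
  unfolding substring_of_def by (auto simp: list_eq_iff_nth_eq) metis+

lemma substring_of_window: "S \<in> C \<Longrightarrow> f \<in> S \<Longrightarrow> substring_of (window f i m) C"
  unfolding substring_of_iff_window by auto

definition is_period :: "(int \<Rightarrow> 'a) \<Rightarrow> nat \<Rightarrow> bool" where
  "is_period f n \<longleftrightarrow> n > 0 \<and> (\<forall>i. f (i + int n) = f i)"

lemma is_period_mult:
  assumes "is_period f n" shows "f (i + int n * m) = f i"
proof -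
  have nonneg: "f (j + int n * int k) = f j" for j k
  proof (induction k)
    case (Suc k)
    have "f (j + int n * int (Suc k)) = f (j + int n * int k + int n)"
      by (simp add: algebra_simps)
    with Suc assms show ?case by (simp add: is_period_def)
  qed simp
  show ?thesis
  proof (cases "m \<ge> 0")
    case True
    then show ?thesis using nonneg[of i "nat m"] by simp
  next
    case False
    then show ?thesis using nonneg[of "i + int n * m" "nat (- m)"] by simp
  qed
qed

lemma is_period_mod: "is_period f n \<Longrightarrow> f (i mod int n) = f i"
  using is_period_mult[of f n "i mod int n" "i div int n"] by (simp add: mult.commute)

lemma window_add_period:
  assumes "is_period f n" shows "window f (i + int n) m = window f i m"
proof (rule nth_equalityI)
  fix t assume "t < length (window f (i + int n) m)"
  moreover have "f (i + int n + int t) = f (i + int t + int n)" by (simp add: ac_simps)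
  ultimately show "window f (i + int n) m ! t = window f i m ! t"
    using assms by (simp add: is_period_def)
qed simp

lemma eq_if_window_period_eq:
  assumes "is_period f n" and "window f i n = window f j n"
  shows "f (t + i) = f (t + j)"
proof -
  have "n > 0" using assms(1) by (simp add: is_period_def)
  define r where "r = nat (t mod int n)"
  have r: "r < n" "int r = t mod int n" using \<open>n > 0\<close> by (auto simp: r_def nat_less_iff)
  have "f (t + i) = f ((t + i) mod int n)" by (simp add: is_period_mod assms(1))
  also have "\<dots> = f ((i + int r) mod int n)" by (simp add: r(2) mod_add_right_eq add.commute)
  also have "\<dots> = window f i n ! r" by (simp add: is_period_mod assms(1) r(1))
  also have "\<dots> = window f j n ! r" by (simp add: assms(2))
  also have "\<dots> = f ((j + int r) mod int n)" by (simp add: is_period_mod assms(1) r(1))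
  also have "\<dots> = f (t + j)" by (simp add: is_period_mod assms(1) r(2) mod_add_right_eq add.commute)
  finally show ?thesis .
qed

lemma shift_orbit_shift: "shift_orbit (\<lambda>i. f (i + k)) = shift_orbit f"
proof -
  have "range (\<lambda>l i. f (i + l + k)) = range ((\<lambda>l i. f (i + l)) \<circ> (\<lambda>l. l + k))"
    by (simp add: comp_def add.assoc)
  also have "\<dots> = range (\<lambda>l i. f (i + l))"
    by (simp only: image_comp [symmetric] surj_plus_right)
  finally show ?thesis by (simp add: shift_orbit_def)
qed

lemma self_in_shift_orbit: "f \<in> shift_orbit f"
  unfolding shift_orbit_def by (auto intro: image_eqI [where x = 0])

lemma chromosome_set_memberE:
  assumes "chromosome_set C" "S \<in> C" "f \<in> S"
  obtains n where "is_period f n" "S = shift_orbit f"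
proof -
  obtain g p where g: "S = shift_orbit g" "p > 0" "\<forall>i. g (i + p) = g i"
    using assms(1,2) unfolding chromosome_set_def is_cyclic_string_def periodic_word_def by blast
  then obtain k where f: "f = (\<lambda>i. g (i + k))"
    using assms(3) unfolding shift_orbit_def by auto
  have "f (i + p) = f i" for i
    using g(3) [rule_format, of "i + k"] by (simp add: f ac_simps)
  then have "is_period f (nat p)"
    using g(2) by (simp add: is_period_def)
  moreover have "S = shift_orbit f"
    by (simp add: f g(1) shift_orbit_shift)
  ultimately show thesis by (rule that)
qed

lemma chromosome_least_periodE:
  assumes "chromosome_set C" "S \<in> C"
  obtains g P where "S = shift_orbit g" "is_period g P" "\<forall>q. is_period g q \<longrightarrow> P \<le> q"
proof -
  obtain g where "g \<in> S"
    using assms unfolding chromosome_set_def is_cyclic_string_def by (auto intro: self_in_shift_orbit)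
  obtain n where "is_period g n" and "S = shift_orbit g"
    using chromosome_set_memberE [OF assms \<open>g \<in> S\<close>] .
  then show thesis
    using that LeastI [of "is_period g", OF \<open>is_period g n\<close>] Least_le [of "is_period g"]
    by blast
qed

lemma cyc_window:
  assumes "is_period f n" shows "cyc (window f i n) = shift_orbit f"
proof -
  have "window f i n ! nat (j mod int n) = f (j + i)" for j
  proof -
    have "n > 0" using assms by (simp add: is_period_def)
    then have "window f i n ! nat (j mod int n) = f (i + j mod int n)"
      by (simp add: nat_less_iff)
    also have "\<dots> = f ((i + j) mod int n)"
      by (metis is_period_mod [OF assms] mod_add_right_eq)
    also have "\<dots> = f (j + i)"
      by (simp add: is_period_mod [OF assms] add.commute)
    finally show ?thesis .
  qed
  then show ?thesis
    unfolding cyc_def by (simp add: shift_orbit_shift)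
qed

lemma cyc_rotate: "cyc (a @ b) = cyc (b @ a)"
proof (cases "a @ b = []")
  case False
  define n where "n = length (a @ b)"
  define e where "e j = (a @ b) ! nat (j mod int n)" for j
  have "n > 0" using False by (simp add: n_def)
  then have period: "is_period e n"
    by (simp add: is_period_def e_def)
  have ab: "window e 0 n = a @ b"
    by (rule nth_equalityI) (simp_all add: e_def n_def)
  have "window e (int (length a)) n = drop (length a) (window e 0 n) @ take (length a) (window e 0 n)"
    using window_add [of e "int (length a)" "length b" "length a"]
      window_add_period [OF period, of 0 "length a"]
    by (simp add: n_def drop_window take_window add.commute)
  then have ba: "window e (int (length a)) n = b @ a"
    by (simp add: ab)
  show ?thesis
    using cyc_window [OF period, of 0] cyc_window [OF period, of "int (length a)"]
    by (simp add: ab ba)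
qed simp

text \<open>Reading s from the vertex u of a de Bruijn graph of order length u leads to slide u s.\<close>

definition slide :: "'a list \<Rightarrow> 'a list \<Rightarrow> 'a list" where
  "slide u s = drop (length s) (u @ s)"

lemma length_slide [simp]: "length (slide u s) = length u"
  by (simp add: slide_def)

lemma slide_Nil [simp]: "slide u [] = u"
  by (simp add: slide_def)

lemma slide_append: "slide u (s @ t) = slide (slide u s) t"
proof -
  have "slide u (s @ t) = drop (length t) (drop (length s) ((u @ s) @ t))"
    by (simp only: slide_def drop_drop length_append add.commute append_assoc)
  also have "drop (length s) ((u @ s) @ t) = slide u s @ t"
    by (simp add: slide_def)
  finally show ?thesis
    by (simp only: slide_def length_append)
qed

lemma suffix_append_iff_slide: "suffix v (v @ a) \<longleftrightarrow> slide v a = v"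
proof
  assume "suffix v (v @ a)"
  then obtain zs where "v @ a = zs @ v" by (auto simp: suffix_def)
  moreover from this have "length zs = length a"
    by (metis add_right_imp_eq length_append add.commute)
  ultimately show "slide v a = v" by (simp add: slide_def)
next
  assume "slide v a = v"
  then show "suffix v (v @ a)"
    unfolding slide_def suffix_def by (metis append_take_drop_id)
qed

lemma slide_window: "slide (window f i m) (window f (i + int m) k) = window f (i + int k) m"
  unfolding slide_def window_add [symmetric]
  by (subst add.commute) (simp add: window_add drop_window)

lemma take_append_last: "length e = Suc K \<Longrightarrow> take K e @ [last e] = e"
  by (metis append_butlast_last_id butlast_conv_take diff_Suc_1 list.size(3) nat.distinct(1))

lemma slide_edge: "length e = Suc K \<Longrightarrow> slide (take K e) [last e] = drop 1 e"
  using take_append_last [of e K] by (simp add: slide_def)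

definition chromosome_loop :: "(int \<Rightarrow> 'a) set set \<Rightarrow> 'a list \<Rightarrow> 'a list \<Rightarrow> bool" where
  "chromosome_loop C v y \<longleftrightarrow> cyc y \<in> C \<and> slide v y = v"

lemma conductor_loop_append:
  assumes "conductor C v" "a \<noteq> []" "b \<noteq> []" "chromosome_loop C v a" "chromosome_loop C v b"
  shows "chromosome_loop C v (a @ b)"
  using assms by (simp add: conductor_def chromosome_loop_def suffix_append_iff_slide slide_append)

lemma chromosome_loop_through_path:
  assumes conductors: "\<forall>v. length v = length v0 \<longrightarrow> conductor C v"
    and "X \<noteq> []"
    and local_loops: "\<forall>m < length X. \<exists>r. chromosome_loop C (slide v0 (take m X)) (X ! m # r)"
  shows "\<exists>R. chromosome_loop C v0 (X @ R)"
  using assms(2) local_loops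
proof (induction X rule: rev_induct)
  case (snoc c X)
  define u where "u = slide v0 X"
  obtain r where r: "chromosome_loop C u (c # r)"
    using snoc.prems(2) by (auto simp: u_def dest: spec [of _ "length X"])
  show ?case
  proof (cases "X = []")
    case True
    then show ?thesis using r by (auto simp: u_def)
  next
    case False
    have "\<forall>m < length X. \<exists>r. chromosome_loop C (slide v0 (take m X)) (X ! m # r)"
    proof (intro allI impI)
      fix m assume "m < length X"
      then show "\<exists>r. chromosome_loop C (slide v0 (take m X)) (X ! m # r)"
        using spec [OF snoc.prems(2), of m] by (simp add: nth_append)
    qed
    then obtain R where R: "chromosome_loop C v0 (X @ R)"
      using snoc.IH [OF False] by blast
    have "slide u R = v0"
      using R by (simp add: chromosome_loop_def slide_append u_def)
    then have "chromosome_loop C u (R @ X)"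
      using R by (simp add: chromosome_loop_def slide_append u_def cyc_rotate)
    moreover have "conductor C u"
      using conductors by (simp add: u_def)
    ultimately have "chromosome_loop C u ((R @ X) @ c # r)"
      using conductor_loop_append r False by blast
    then have "chromosome_loop C v0 ((X @ [c]) @ r @ R)"
      using \<open>slide u R = v0\<close> r cyc_rotate [of R "X @ c # r"] slide_append [of u "c # r" R]
      by (simp add: chromosome_loop_def slide_append u_def)
    then show ?thesis by blast
  qed
qed simp

lemma closed_path_in_chromosomes:
  assumes conductors: "\<forall>v. length v = length v0 \<longrightarrow> conductor C v"
    and "X \<noteq> []" and closed: "slide v0 X = v0"
    and "\<forall>m < length X. \<exists>r. chromosome_loop C (slide v0 (take m X)) (X ! m # r)"
  shows "cyc X \<in> C"
proof -
  obtain R where R: "chromosome_loop C v0 (X @ R)"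
    using chromosome_loop_through_path assms by blast
  show ?thesis
  proof (cases "R = []")
    case True
    then show ?thesis using R by (simp add: chromosome_loop_def)
  next
    case False
    have "slide v0 R = v0"
      using R closed by (simp add: chromosome_loop_def slide_append)
    then show ?thesis
      using conductors R closed \<open>X \<noteq> []\<close> False
      by (simp add: conductor_def chromosome_loop_def suffix_append_iff_slide)
  qed
qed

lemma is_period_if_window_commute:
  assumes period: "is_period g P" and ab: "window g i P = a @ b" and ba: "window g i P = b @ a"
    and "a \<noteq> []"
  shows "is_period g (length a)"
proof -
  define q where "q = length a"
  have P: "P = q + length b"
    using arg_cong [OF ab, of length] by (simp add: q_def)
  have a: "window g i q = a"
    using arg_cong [OF ab, of "take q"] by (simp add: P take_window q_def)
  have b: "window g (i + int q) (P - q) = b"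
    using arg_cong [OF ab, of "drop q"] by (simp add: P drop_window q_def)
  have "window g (i + int q) P = window g (i + int q) (P - q) @ window g (i + int q + int (P - q)) q"
    using window_add [of g "i + int q" "P - q" q] by (simp add: P add.commute)
  also have "\<dots> = b @ a"
    using window_add_period [OF period, of i q] a b by (simp add: P add.assoc)
  also have "\<dots> = window g i P"
    using ba by simp
  finally have shifted: "g (t + (i + int q)) = g (t + i)" for t
    using eq_if_window_period_eq [OF period] by blast
  have "g (s + int q) = g s" for s
    using shifted [of "s - i"] by (simp add: algebra_simps)
  then show ?thesis
    using \<open>a \<noteq> []\<close> by (simp add: is_period_def q_def)
qed

lemma primitive_walk_if_least_period:
  assumes label: "map h es = window g i (length es)"
    and period: "is_period g (length es)"
    and least: "\<forall>q. is_period g q \<longrightarrow> length es \<le> q"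
  shows "primitive_walk es"
  unfolding primitive_walk_def
proof clarify
  fix ys k assume "2 \<le> k" and es: "es = concat (replicate k ys)"
  then obtain k' where k: "k = Suc k'" by (cases k) auto
  define zs where "zs = concat (replicate k' ys)"
  have "concat (replicate (Suc k') ys) = concat (replicate k' ys @ [ys])"
    by (simp only: replicate_Suc replicate_append_same)
  then have ys_zs: "es = ys @ zs" and zs_ys: "es = zs @ ys"
    by (simp_all add: es zs_def k(1))
  have "ys \<noteq> []"
    using period es by (auto simp: is_period_def)
  have "window g i (length es) = map h ys @ map h zs"
    using label by (simp add: ys_zs)
  moreover have "window g i (length es) = map h zs @ map h ys"
    using label by (simp add: zs_ys)
  ultimately have "is_period g (length ys)"
    using is_period_if_window_commute [OF period] \<open>ys \<noteq> []\<close> by fastforce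
  moreover have "length ys < length es"
    using \<open>2 \<le> k\<close> \<open>ys \<noteq> []\<close> by (simp add: es length_concat sum_list_replicate)
  ultimately show False
    using least by (auto dest: spec [of _ "length ys"])
qed

lemma chromosome_loop_of_substring:
  assumes "chromosome_set C" and "substring_of (u @ [c]) C"
  shows "\<exists>r. chromosome_loop C u (c # r)"
proof -
  obtain S f i where S: "S \<in> C" "f \<in> S" and w: "u @ [c] = window f i (Suc (length u))"
    using assms(2) unfolding substring_of_iff_window by auto
  obtain n where period: "is_period f n" and "S = shift_orbit f"
    using chromosome_set_memberE [OF assms(1) S] .
  define z where "z = window f (i + int (length u)) n"
  have "n > 0" using period by (simp add: is_period_def)
  have "hd z = c"
    using w [THEN arg_cong, of last] \<open>n > 0\<close>
    by (auto simp: z_def last_window hd_window gr0_conv_Suc)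
  then have "z = c # tl z"
    using \<open>n > 0\<close> by (metis length_window list.collapse list.size(3) not_less_zero z_def)
  moreover have "u = window f i (length u)"
    using w [THEN arg_cong, of "take (length u)"] by (simp add: take_window)
  then have "slide u z = u"
    using slide_window [of f i "length u" n] window_add_period [OF period]
    by (simp add: z_def)
  moreover have "cyc z \<in> C"
    using cyc_window [OF period] S \<open>S = shift_orbit f\<close> by (simp add: z_def)
  ultimately show ?thesis
    unfolding chromosome_loop_def by metis
qed

lemma closed_walk_DBG_iff:
  "closed_walk (DBG C K) es \<longleftrightarrow> es \<noteq> [] \<and>
     (\<forall>e\<in>set es. length e = Suc K \<and> substring_of e C \<and>
        substring_of (take K e) C \<and> substring_of (drop 1 e) C) \<and>
     (\<forall>i. Suc i < length es \<longrightarrow> drop 1 (es ! i) = take K (es ! Suc i)) \<and>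
     drop 1 (last es) = take K (hd es)"
  by (auto simp: closed_walk_def DBG_def)

lemma walk_label_DBG:
  assumes "es \<noteq> []" and "\<forall>e\<in>set es. length e = Suc K"
  shows "walk_label (DBG C K) es = take K (hd es) @ map last es"
proof -
  have "drop (length (take K e)) e = [last e]" if "e \<in> set (tl es)" for e
    using take_append_last [of e K] assms that list.set_sel(2)
    by (metis append_eq_conv_conj length_take min_absorb1 le_SucI le_refl)
  then have "concat (map (\<lambda>e. drop (length (take K e)) e) (tl es)) = map last (tl es)"
    by (simp add: concat_map_singleton cong: map_cong)
  then show ?thesis
    using assms take_append_last [of "hd es" K]
    by (cases es) (auto simp: walk_label_def DBG_def)
qed

lemma slide_along_closed_walk_DBG:
  assumes "closed_walk (DBG C K) es" and "m \<le> length es"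
  shows "slide (take K (hd es)) (take m (map last es)) = take K (es ! (m mod length es))"
  using assms(2)
proof (induction m)
  case 0
  then show ?case using assms(1) by (simp add: closed_walk_DBG_iff hd_conv_nth)
next
  case (Suc m)
  define n where "n = length es"
  have "m < n" using Suc.prems by (simp add: n_def)
  have edge: "length (es ! m) = Suc K"
    using assms(1) \<open>m < n\<close> by (simp add: closed_walk_DBG_iff n_def)
  have step: "drop 1 (es ! m) = take K (es ! (Suc m mod n))"
  proof (cases "Suc m < n")
    case True
    then show ?thesis using assms(1) by (simp add: closed_walk_DBG_iff n_def)
  next
    case False
    then have "length es = Suc m" using \<open>m < n\<close> by (simp add: n_def)
    moreover have "es \<noteq> []" using \<open>m < n\<close> by (auto simp: n_def)
    ultimately have "es ! m = last es" "es ! (Suc m mod n) = hd es"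
      by (simp_all add: n_def last_conv_nth hd_conv_nth)
    then show ?thesis
      using assms(1) by (simp add: closed_walk_DBG_iff)
  qed
  have "take (Suc m) (map last es) = take m (map last es) @ [last (es ! m)]"
    using \<open>m < n\<close> by (simp add: n_def take_Suc_conv_app_nth)
  then show ?case
    using Suc.IH \<open>m < n\<close> slide_edge [OF edge] step
    by (simp add: slide_append n_def)
qed

lemma CPC_DBG_subset:
  assumes "chromosome_set C" and conductors: "\<forall>v. length v = K \<longrightarrow> conductor C v"
  shows "CPC (DBG C K) \<subseteq> C"
proof
  fix S assume "S \<in> CPC (DBG C K)"
  then obtain es x where walk: "closed_walk (DBG C K) es" and "S = cyc x" and "x \<noteq> []"
    and label: "walk_label (DBG C K) es = take K (hd es) @ x"
    unfolding CPC_def by (auto simp: DBG_def)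
  define v0 where "v0 = take K (hd es)"
  have "es \<noteq> []" and edges: "\<forall>e\<in>set es. length e = Suc K \<and> substring_of e C"
    using walk by (simp_all add: closed_walk_DBG_iff)
  then have "x = map last es"
    using label walk_label_DBG [of es K C] by simp
  have "length v0 = K"
    using edges \<open>es \<noteq> []\<close> by (simp add: v0_def)
  have "slide v0 x = v0"
    using slide_along_closed_walk_DBG [OF walk, of "length es"] \<open>es \<noteq> []\<close>
    by (simp add: \<open>x = map last es\<close> v0_def hd_conv_nth)
  moreover have "\<exists>r. chromosome_loop C (slide v0 (take m x)) (x ! m # r)" if "m < length x" for m
  proof -
    have "m < length es" using that by (simp add: \<open>x = map last es\<close>)
    then have "substring_of (take K (es ! m) @ [last (es ! m)]) C"
      using edges take_append_last [of "es ! m" K] by (simp add: nth_mem)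
    then show ?thesis
      using chromosome_loop_of_substring [OF assms(1)] slide_along_closed_walk_DBG [OF walk, of m]
        \<open>m < length es\<close> by (simp add: \<open>x = map last es\<close> v0_def)
  qed
  ultimately show "S \<in> C"
    using closed_path_in_chromosomes [of v0 C x] conductors \<open>length v0 = K\<close> \<open>x \<noteq> []\<close> \<open>S = cyc x\<close>
    by blast
qed

lemma chromosome_in_CPC_DBG:
  assumes "chromosome_set C" and "S \<in> C"
  shows "S \<in> CPC (DBG C K)"
proof -
  obtain g P where S: "S = shift_orbit g" and period: "is_period g P"
    and least: "\<forall>q. is_period g q \<longrightarrow> P \<le> q"
    using chromosome_least_periodE [OF assms] .
  have "P > 0" using period by (simp add: is_period_def)
  define es where "es = map (\<lambda>t. window g (int t) (Suc K)) [0..<P]"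
  have "length es = P" by (simp add: es_def)
  have sub: "substring_of (window g i m) C" for i m
    using substring_of_window [OF assms(2)] self_in_shift_orbit [of g] S by simp
  have "closed_walk (DBG C K) es"
    unfolding closed_walk_DBG_iff using \<open>P > 0\<close> window_add_period [OF period, of 0 K]
    by (auto simp: es_def sub take_window drop_window last_map hd_map add.commute)
  moreover have "map last es = window g (int K) P"
    by (rule nth_equalityI) (simp_all add: es_def last_window add.commute)
  moreover have "walk_label (DBG C K) es = take K (hd es) @ map last es"
    using \<open>P > 0\<close> by (intro walk_label_DBG) (auto simp: es_def)
  moreover have "primitive_walk es"
    using primitive_walk_if_least_period [of last es g "int K"] \<open>length es = P\<close>
      \<open>map last es = window g (int K) P\<close> period least by simp
  moreover have "cyc (window g (int K) P) = S"
    using cyc_window [OF period] S by simp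
  moreover have "vlab (DBG C K) (src (DBG C K) (hd es)) = take K (hd es)"
    by (simp add: DBG_def)
  moreover have "window g (int K) P \<noteq> []"
    using \<open>P > 0\<close> by (simp flip: length_greater_0_conv)
  ultimately show ?thesis
    unfolding CPC_def by (intro CollectI exI [of _ es] exI [of _ "window g (int K) P"]) auto
qed

theorem theorem6:
  fixes C :: "(int \<Rightarrow> 'a::finite) set set" and K :: nat
  assumes "chromosome_set C"
    and "K \<ge> 1"
    and "\<forall>v::'a list. length v = K \<longrightarrow> conductor C v"
  shows "CPC (DBG C K) = C"
  using CPC_DBG_subset [OF assms(1,3)] chromosome_in_CPC_DBG [OF assms(1)] by blast

end
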